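(* For every total Boolean function $f:\{0,1\}^n\to\{0,1\}$ and every $\epsilon\in[0,1/2)$, $\lambda(f)\le\frac{1}{1-2\epsilon}\,\widetilde{\deg}_\epsilon(f)$.
   Context: Here $\widetilde{\deg}_\epsilon(f)$ is the minimum degree of a real polynomial $q$ such that for all $x\in\{0,1\}^n$, $f(x)=1\Rightarrow q(x)\in[1-2\epsilon,1]$ and $f(x)=0\Rightarrow q(x)\in[-1,-1+2\epsilon]$. The sensitivity graph $G_f$ has vertex set $\{0,1\}^n$ and an edge between $x,y$ iff they differ in exactly one coordinate and $f(x)\ne f(y)$; $A_f$ is its adjacency matrix and $\lambda(f)=\|A_f\|$ (spectral norm). *)

theory Defs
  imports "HOL-Analysis.Analysis"
begin

definition cube :: "nat \<Rightarrow> bool list set" where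
  "cube n = {x. length x = n}"

definition bit :: "bool list \<Rightarrow> nat \<Rightarrow> real" where
  "bit x i = (if x ! i then 1 else 0)"

definition is_poly_deg_le :: "nat \<Rightarrow> nat \<Rightarrow> (bool list \<Rightarrow> real) \<Rightarrow> bool" where
  "is_poly_deg_le n d q \<longleftrightarrow>
     (\<exists>(A :: (nat \<Rightarrow> nat) set) (c :: (nat \<Rightarrow> nat) \<Rightarrow> real).
        finite A \<and>
        (\<forall>\<alpha>\<in>A. (\<forall>i\<ge>n. \<alpha> i = 0) \<and> (\<Sum>i<n. \<alpha> i) \<le> d) \<and>
        (\<forall>x\<in>cube n. q x = (\<Sum>\<alpha>\<in>A. c \<alpha> * (\<Prod>i<n. bit x i ^ \<alpha> i))))"

text \<open>epsilon-approximating polynomial in the +-1 output convention of the paper.\<close>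
definition eps_approx :: "nat \<Rightarrow> real \<Rightarrow> (bool list \<Rightarrow> bool) \<Rightarrow> (bool list \<Rightarrow> real) \<Rightarrow> bool" where
  "eps_approx n \<epsilon> f q \<longleftrightarrow>
     (\<forall>x\<in>cube n. (f x \<longrightarrow> 1 - 2*\<epsilon> \<le> q x \<and> q x \<le> 1) \<and>
                  (\<not> f x \<longrightarrow> -1 \<le> q x \<and> q x \<le> -1 + 2*\<epsilon>))"

definition approx_deg :: "nat \<Rightarrow> real \<Rightarrow> (bool list \<Rightarrow> bool) \<Rightarrow> nat" where
  "approx_deg n \<epsilon> f = (LEAST d. \<exists>q. is_poly_deg_le n d q \<and> eps_approx n \<epsilon> f q)"

definition sens_adj :: "nat \<Rightarrow> (bool list \<Rightarrow> bool) \<Rightarrow> bool list \<Rightarrow> bool list \<Rightarrow> real" where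
  "sens_adj n f x y =
     (if x \<in> cube n \<and> y \<in> cube n \<and> card {i. i < n \<and> x ! i \<noteq> y ! i} = 1 \<and> f x \<noteq> f y
      then 1 else 0)"

definition sens_lambda :: "nat \<Rightarrow> (bool list \<Rightarrow> bool) \<Rightarrow> real" where
  "sens_lambda n f =
     Sup {sqrt (\<Sum>x\<in>cube n. (\<Sum>y\<in>cube n. sens_adj n f x y * v y)^2) | v.
            (\<Sum>x\<in>cube n. (v x)^2) = 1}"

end

theory Submission
  imports Defs
begin

text \<open>Let \<open>q\<close> be an \<open>\<epsilon>\<close>-approximating polynomial of degree \<open>d\<close> for \<open>f\<close> and let \<open>F = \<plusminus>1\<close> be
  the signed version of \<open>f\<close>.  Across every edge \<open>{x, y}\<close> of the sensitivity graph
  \<open>(q x - q y) (F x - F y) \<ge> 4 (1 - 2\<epsilon>)\<close>, so for nonnegative \<open>b\<close>, \<open>c\<close>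
  \<open>\<langle>b, A\<^sub>f c\<rangle> \<le> (\<langle>F b, C c\<rangle> - \<langle>b, C (F c)\<rangle>) / (4 (1 - 2\<epsilon>))\<close>, where \<open>C = M\<^sub>q A - A M\<^sub>q\<close> is the
  commutator of multiplication by \<open>q\<close> with the adjacency operator \<open>A\<close> of the hypercube.
  In the Walsh basis \<open>A\<close> is diagonal with entry \<open>n - 2 |S|\<close> at \<open>S\<close>, while \<open>M\<^sub>q\<close> has norm at
  most 1 and couples only sets \<open>S\<close>, \<open>R\<close> with \<open>|S \<triangle> R| \<le> d\<close>.  Bernstein's inequality for banded
  matrices, which follows from M. Riesz's interpolation formula for trigonometric polynomials,
  then gives \<open>\<parallel>C\<parallel> \<le> 2 d\<close>.  Since \<open>A\<^sub>f\<close> has nonnegative entries, bounding its bilinear form on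
  nonnegative vectors by \<open>d / (1 - 2\<epsilon>)\<close> bounds its norm.\<close>

section \<open>Riesz interpolation and Bernstein's inequality for banded matrices\<close>

text \<open>Nodes and weights of M. Riesz's interpolation formula
  \<open>T'(0) = (\<Sum>k<2*d. riesz_weight d k * T (riesz_node d k))\<close> for trigonometric polynomials \<open>T\<close>
  of degree at most \<open>d\<close>; it is only needed here for \<open>T \<theta> = sin (m \<theta>)\<close>.\<close>
definition riesz_node :: "nat \<Rightarrow> nat \<Rightarrow> real" where
  "riesz_node d k = (2 * real k + 1) * pi / (2 * real d)"

definition riesz_weight :: "nat \<Rightarrow> nat \<Rightarrow> real" where
  "riesz_weight d k = (-1) ^ k / (4 * real d * (sin (riesz_node d k / 2))\<^sup>2)"

lemma sin_half_riesz_node_pos: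
  assumes "d > 0" "k < 2 * d"
  shows "sin (riesz_node d k / 2) > 0"
proof (rule sin_gt_zero)
  show "0 < riesz_node d k / 2"
    using assms by (simp add: riesz_node_def)
  have "(2 * real k + 1) * pi < (4 * real d) * pi"
    using assms by simp
  then show "riesz_node d k / 2 < pi"
    using assms by (simp add: riesz_node_def field_simps)
qed

lemma riesz_node_times_degree:
  assumes "d > 0"
  shows "cos (real d * riesz_node d k) = 0" and "sin (real d * riesz_node d k) = (-1) ^ k"
proof -
  have "real d * riesz_node d k = real k * pi + pi / 2"
    using assms by (simp add: riesz_node_def field_simps)
  then show "cos (real d * riesz_node d k) = 0" and "sin (real d * riesz_node d k) = (-1) ^ k"
    by (simp_all add: cos_add sin_add)
qed

lemma riesz_node_shift:
  assumes "d > 0"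
  shows "real m * riesz_node d k + real m * pi / (2 * real d) = real m * real (Suc k) * pi / real d"
    and "real m * riesz_node d k - real m * pi / (2 * real d) = real m * real k * pi / real d"
  using assms by (simp_all add: riesz_node_def field_simps)

lemma sum_cos_riesz_node:
  assumes d: "d > 0" and m: "1 \<le> m" "m < 2 * d"
  shows "(\<Sum>k<2*d. cos (real m * riesz_node d k)) = 0"
proof -
  define a where "a = real m * pi / (2 * real d)"
  define t where "t k = sin (real m * real k * pi / real d)" for k
  have "2 * sin a * cos (real m * riesz_node d k) = t (Suc k) - t k" for k
  proof -
    have "2 * sin a * cos (real m * riesz_node d k)
        = sin (real m * riesz_node d k + a) - sin (real m * riesz_node d k - a)"
      by (simp add: sin_add sin_diff)
    then show ?thesis
      unfolding a_def t_def riesz_node_shift[OF d] .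
  qed
  then have "2 * sin a * (\<Sum>k<2*d. cos (real m * riesz_node d k)) = t (2 * d) - t 0"
    by (simp add: sum_distrib_left sum_lessThan_telescope)
  also have "\<dots> = 0"
    using d sin_npi[of "2 * m"] by (simp add: t_def field_simps)
  finally show ?thesis
    using m sin_gt_zero[of a] d by (simp add: a_def field_simps)
qed

lemma sum_alternating_sin_riesz_node:
  assumes d: "d > 0" and m: "m < d"
  shows "(\<Sum>k<2*d. (-1) ^ k * sin (real m * riesz_node d k)) = 0"
proof -
  define a where "a = real m * pi / (2 * real d)"
  define t where "t k = sin (real m * real k * pi / real d)" for k
  have "2 * cos a * sin (real m * riesz_node d k) = t (Suc k) + t k" for k
  proof -
    have "2 * cos a * sin (real m * riesz_node d k)
        = sin (real m * riesz_node d k + a) + sin (real m * riesz_node d k - a)"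
      by (simp add: sin_add sin_diff)
    then show ?thesis
      unfolding a_def t_def riesz_node_shift[OF d] .
  qed
  then have "2 * cos a * (\<Sum>k<2*d. (-1) ^ k * sin (real m * riesz_node d k))
      = (\<Sum>k<2*d. (-1) ^ k * t k - (-1) ^ Suc k * t (Suc k))"
    by (simp add: sum_distrib_left algebra_simps)
  also have "\<dots> = t 0 - t (2 * d)"
    using sum_lessThan_telescope'[of "\<lambda>k. (-1) ^ k * t k" "2 * d"] by simp
  also have "\<dots> = 0"
    using d sin_npi[of "2 * m"] by (simp add: t_def field_simps)
  moreover have "cos a > 0"
  proof (rule cos_gt_zero_pi)
    have "0 \<le> a"
      by (simp add: a_def)
    then show "- (pi / 2) < a"
      using pi_gt_zero by linarith
    have "real m * pi < real d * pi"
      using m by simp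
    then show "a < pi / 2"
      using d by (simp add: a_def field_simps)
  qed
  ultimately show ?thesis
    by simp
qed

lemma cos_second_difference:
  fixes x t :: real
  shows "(1 - cos (x + t)) - 2 * (1 - cos x) + (1 - cos (x - t)) = 4 * (sin (t / 2))\<^sup>2 * cos x"
proof -
  have half_angle: "cos t = 1 - 2 * (sin (t / 2))\<^sup>2"
    using cos_double_sin[of "t / 2"] by simp
  show ?thesis
    by (simp add: cos_add cos_diff half_angle algebra_simps)
qed

lemma sin_second_difference:
  fixes x t :: real
  shows "sin (x + t) - 2 * sin x + sin (x - t) = - 4 * (sin (t / 2))\<^sup>2 * sin x"
proof -
  have half_angle: "cos t = 1 - 2 * (sin (t / 2))\<^sup>2"
    using cos_double_sin[of "t / 2"] by simp
  show ?thesis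
    by (simp add: sin_add sin_diff half_angle algebra_simps)
qed

lemma linear_if_second_difference_zero:
  fixes g :: "nat \<Rightarrow> 'a :: comm_ring_1"
  assumes "g 0 = 0"
    and "\<And>m. m + 2 \<le> N \<Longrightarrow> g (m + 2) - 2 * g (m + 1) + g m = 0"
    and "m \<le> N"
  shows "g m = of_nat m * g 1"
proof -
  have step: "g (Suc m) - g m = g 1" if "Suc m \<le> N" for m
    using that
  proof (induction m)
    case (Suc m)
    then show ?case
      using assms(2)[of m] by (simp add: algebra_simps)
  qed (simp add: assms(1))
  show ?thesis
    using assms(3)
  proof (induction m)
    case (Suc m)
    then show ?case
      using step[of m] by (simp add: algebra_simps)
  qed (simp add: assms(1))
qed

lemma sum_one_minus_cos_riesz_node:
  assumes d: "d > 0" and m: "m \<le> 2 * d"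
  shows "(\<Sum>k<2*d. (1 - cos (real m * riesz_node d k)) / (sin (riesz_node d k / 2))\<^sup>2)
    = 4 * real d * real m"
proof -
  define E where
    "E m = (\<Sum>k<2*d. (1 - cos (real m * riesz_node d k)) / (sin (riesz_node d k / 2))\<^sup>2)" for m
  have second_difference:
    "E (m + 2) - 2 * E (m + 1) + E m = 4 * (\<Sum>k<2*d. cos (real (m + 1) * riesz_node d k))" for m
  proof -
    define x where "x k = real (m + 1) * riesz_node d k" for k
    have "E (m + 2) - 2 * E (m + 1) + E m
        = (\<Sum>k<2*d. ((1 - cos (x k + riesz_node d k)) - 2 * (1 - cos (x k))
            + (1 - cos (x k - riesz_node d k))) / (sin (riesz_node d k / 2))\<^sup>2)"
      unfolding E_def x_def sum_subtractf[symmetric] sum.distrib[symmetric] sum_distrib_left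
      by (rule sum.cong) (simp_all add: algebra_simps diff_divide_distrib add_divide_distrib)
    also have "\<dots> = (\<Sum>k<2*d. 4 * cos (x k))"
    proof (rule sum.cong[OF refl])
      fix k assume "k \<in> {..<2*d}"
      then have "sin (riesz_node d k / 2) \<noteq> 0"
        using sin_half_riesz_node_pos[OF d] by fastforce
      then show "((1 - cos (x k + riesz_node d k)) - 2 * (1 - cos (x k))
            + (1 - cos (x k - riesz_node d k))) / (sin (riesz_node d k / 2))\<^sup>2 = 4 * cos (x k)"
        unfolding cos_second_difference by simp
    qed
    finally show ?thesis
      by (simp add: x_def sum_distrib_left)
  qed
  have "(1 - cos (riesz_node d k)) / (sin (riesz_node d k / 2))\<^sup>2 = 2" if "k < 2 * d" for k
    using sin_half_riesz_node_pos[OF d that] cos_double_sin[of "riesz_node d k / 2"]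
    by (simp add: field_simps)
  then have "E 1 = 4 * real d"
    by (simp add: E_def)
  moreover have "E m = real m * E 1"
  proof (rule linear_if_second_difference_zero[OF _ _ m])
    show "E 0 = 0"
      by (simp add: E_def)
    show "E (k + 2) - 2 * E (k + 1) + E k = 0" if "k + 2 \<le> 2 * d" for k
      using that second_difference[of k] sum_cos_riesz_node[OF d, of "k + 1"] by simp
  qed
  ultimately show ?thesis
    by (simp add: E_def)
qed

lemma sum_inverse_sin_sq_riesz_node:
  assumes d: "d > 0"
  shows "(\<Sum>k<2*d. 1 / (sin (riesz_node d k / 2))\<^sup>2) = 4 * (real d)\<^sup>2"
  using sum_one_minus_cos_riesz_node[OF d, of d] d
  by (simp add: riesz_node_times_degree power2_eq_square)

lemma sum_abs_riesz_weight:
  assumes d: "d > 0"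
  shows "(\<Sum>k<2*d. \<bar>riesz_weight d k\<bar>) = real d"
proof -
  have "(\<Sum>k<2*d. \<bar>riesz_weight d k\<bar>) = (\<Sum>k<2*d. 1 / (sin (riesz_node d k / 2))\<^sup>2) / (4 * real d)"
    unfolding sum_divide_distrib
    by (rule sum.cong) (simp_all add: riesz_weight_def abs_mult power_abs)
  then show ?thesis
    unfolding sum_inverse_sin_sq_riesz_node[OF d] using d by (simp add: power2_eq_square)
qed

lemma sum_riesz_weight_sin_degree:
  assumes d: "d > 0"
  shows "(\<Sum>k<2*d. riesz_weight d k * sin (real d * riesz_node d k)) = real d"
proof -
  have "(\<Sum>k<2*d. riesz_weight d k * sin (real d * riesz_node d k))
      = (\<Sum>k<2*d. 1 / (sin (riesz_node d k / 2))\<^sup>2) / (4 * real d)"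
    unfolding sum_divide_distrib
  proof (rule sum.cong[OF refl])
    fix k
    have "(-1::real) ^ k * (-1) ^ k = 1"
      by (simp add: power_mult_distrib[symmetric])
    then show "riesz_weight d k * sin (real d * riesz_node d k)
        = 1 / (sin (riesz_node d k / 2))\<^sup>2 / (4 * real d)"
      using d by (simp add: riesz_weight_def riesz_node_times_degree)
  qed
  then show ?thesis
    unfolding sum_inverse_sin_sq_riesz_node[OF d] using d by (simp add: power2_eq_square)
qed

lemma riesz_interpolation_nat:
  assumes d: "d > 0" and m: "m \<le> d"
  shows "(\<Sum>k<2*d. riesz_weight d k * sin (real m * riesz_node d k)) = real m"
proof -
  define F where "F m = (\<Sum>k<2*d. riesz_weight d k * sin (real m * riesz_node d k))" for m
  have second_difference:
    "F (m + 2) - 2 * F (m + 1) + F m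
       = - (\<Sum>k<2*d. (-1) ^ k * sin (real (m + 1) * riesz_node d k)) / real d" for m
  proof -
    define x where "x k = real (m + 1) * riesz_node d k" for k
    have "F (m + 2) - 2 * F (m + 1) + F m
        = (\<Sum>k<2*d. riesz_weight d k * (sin (x k + riesz_node d k) - 2 * sin (x k)
            + sin (x k - riesz_node d k)))"
      unfolding F_def x_def sum_subtractf[symmetric] sum.distrib[symmetric] sum_distrib_left
      by (rule sum.cong) (simp_all add: algebra_simps)
    also have "\<dots> = (\<Sum>k<2*d. - ((-1) ^ k * sin (x k)) / real d)"
    proof (rule sum.cong[OF refl])
      fix k assume "k \<in> {..<2*d}"
      then have "sin (riesz_node d k / 2) \<noteq> 0"
        using sin_half_riesz_node_pos[OF d] by fastforce
      then show "riesz_weight d k * (sin (x k + riesz_node d k) - 2 * sin (x k)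
            + sin (x k - riesz_node d k)) = - ((-1) ^ k * sin (x k)) / real d"
        unfolding sin_second_difference riesz_weight_def using d by (simp add: field_simps)
    qed
    finally show ?thesis
      by (simp add: x_def sum_divide_distrib sum_negf)
  qed
  have linear: "F m = real m * F 1" if "m \<le> d" for m
  proof (rule linear_if_second_difference_zero[OF _ _ that])
    show "F 0 = 0"
      by (simp add: F_def)
    show "F (k + 2) - 2 * F (k + 1) + F k = 0" if "k + 2 \<le> d" for k
      using that second_difference[of k] sum_alternating_sin_riesz_node[OF d, of "k + 1"] by simp
  qed
  then have "F 1 = 1"
    using linear[of d] sum_riesz_weight_sin_degree[OF d] d by (simp add: F_def)
  then show ?thesis
    using linear[OF m] by (simp add: F_def)
qed

lemma riesz_interpolation:
  fixes m :: int
  assumes d: "d > 0" and m: "\<bar>m\<bar> \<le> int d"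
  shows "(\<Sum>k<2*d. riesz_weight d k * sin (of_int m * riesz_node d k)) = of_int m"
proof (cases "m \<ge> 0")
  case True
  then show ?thesis
    using riesz_interpolation_nat[OF d, of "nat m"] m by simp
next
  case False
  then show ?thesis
    using riesz_interpolation_nat[OF d, of "nat (- m)"] m by (simp add: sum_negf)
qed

lemma mult_add_mult_le_sqrt_sum_squares:
  fixes p q r s :: real
  shows "p * q + r * s \<le> sqrt (p\<^sup>2 + r\<^sup>2) * sqrt (q\<^sup>2 + s\<^sup>2)"
  using norm_cauchy_schwarz[of "(p, r)" "(q, s)"] by (simp add: inner_prod_def norm_prod_def)

lemma L2_set_sin_cos_split:
  fixes a :: "'a \<Rightarrow> real"
  shows "sqrt ((L2_set (\<lambda>S. a S * sin (h S)) P)\<^sup>2 + (L2_set (\<lambda>S. a S * cos (h S)) P)\<^sup>2)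
    = L2_set a P"
proof -
  have "(\<Sum>S\<in>P. (a S * sin (h S))\<^sup>2) + (\<Sum>S\<in>P. (a S * cos (h S))\<^sup>2) = (\<Sum>S\<in>P. (a S)\<^sup>2)"
    unfolding sum.distrib[symmetric]
    by (rule sum.cong) (simp_all add: power_mult_distrib distrib_left[symmetric])
  then show ?thesis
    by (simp add: L2_set_def sum_nonneg)
qed

lemma rotated_form_bound:
  fixes sz :: "'a \<Rightarrow> nat" and K :: "'a \<Rightarrow> 'a \<Rightarrow> real" and a b :: "'a \<Rightarrow> real"
  assumes bounded: "\<And>\<alpha> \<beta>. \<bar>\<Sum>S\<in>P. \<Sum>R\<in>P. \<alpha> S * \<beta> R * K S R\<bar> \<le> M * L2_set \<alpha> P * L2_set \<beta> P"
    and M: "M \<ge> 0"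
  shows "\<bar>\<Sum>S\<in>P. \<Sum>R\<in>P. a S * b R * sin ((real (sz S) - real (sz R)) * \<theta>) * K S R\<bar>
    \<le> M * L2_set a P * L2_set b P"
proof -
  define as ac bs bc where
    "as = (\<lambda>S. a S * sin (real (sz S) * \<theta>))" and "ac = (\<lambda>S. a S * cos (real (sz S) * \<theta>))" and
    "bs = (\<lambda>S. b S * sin (real (sz S) * \<theta>))" and "bc = (\<lambda>S. b S * cos (real (sz S) * \<theta>))"
  have "(\<Sum>S\<in>P. \<Sum>R\<in>P. a S * b R * sin ((real (sz S) - real (sz R)) * \<theta>) * K S R)
      = (\<Sum>S\<in>P. \<Sum>R\<in>P. as S * bc R * K S R) - (\<Sum>S\<in>P. \<Sum>R\<in>P. ac S * bs R * K S R)"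
    unfolding sum_subtractf[symmetric]
    by (intro sum.cong refl) (simp add: as_def ac_def bs_def bc_def sin_diff algebra_simps)
  then have "\<bar>\<Sum>S\<in>P. \<Sum>R\<in>P. a S * b R * sin ((real (sz S) - real (sz R)) * \<theta>) * K S R\<bar>
      \<le> M * (L2_set as P * L2_set bc P + L2_set ac P * L2_set bs P)"
    using bounded[of as bc] bounded[of ac bs] by (simp add: algebra_simps)
  also have "\<dots> \<le> M * (sqrt ((L2_set as P)\<^sup>2 + (L2_set ac P)\<^sup>2) * sqrt ((L2_set bs P)\<^sup>2 + (L2_set bc P)\<^sup>2))"
    using mult_add_mult_le_sqrt_sum_squares[of "L2_set as P" "L2_set bc P" "L2_set ac P" "L2_set bs P"] M
    by (simp add: mult_left_mono add.commute)
  also have "\<dots> = M * L2_set a P * L2_set b P"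
    using L2_set_sin_cos_split[of a "\<lambda>S. real (sz S) * \<theta>" P]
      L2_set_sin_cos_split[of b "\<lambda>S. real (sz S) * \<theta>" P]
    by (simp add: as_def ac_def bs_def bc_def)
  finally show ?thesis .
qed

lemma banded_form_riesz_expansion:
  fixes sz :: "'a \<Rightarrow> nat" and K :: "'a \<Rightarrow> 'a \<Rightarrow> real" and a b :: "'a \<Rightarrow> real"
  assumes d: "d > 0"
    and banded: "\<And>S R. S \<in> P \<Longrightarrow> R \<in> P \<Longrightarrow> K S R \<noteq> 0 \<Longrightarrow> \<bar>int (sz S) - int (sz R)\<bar> \<le> int d"
  shows "(\<Sum>S\<in>P. \<Sum>R\<in>P. a S * b R * (real (sz S) - real (sz R)) * K S R)
    = (\<Sum>k<2*d. riesz_weight d k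
        * (\<Sum>S\<in>P. \<Sum>R\<in>P. a S * b R * sin ((real (sz S) - real (sz R)) * riesz_node d k) * K S R))"
proof -
  have "a S * b R * (real (sz S) - real (sz R)) * K S R
      = (\<Sum>k<2*d. riesz_weight d k * (a S * b R * sin ((real (sz S) - real (sz R)) * riesz_node d k) * K S R))"
    if "S \<in> P" "R \<in> P" for S R
  proof (cases "K S R = 0")
    case False
    have "(\<Sum>k<2*d. riesz_weight d k * sin (of_int (int (sz S) - int (sz R)) * riesz_node d k))
        = of_int (int (sz S) - int (sz R))"
      using riesz_interpolation[OF d banded[OF that False]] .
    then show ?thesis
      by (simp add: sum_distrib_left[symmetric] sum_distrib_right[symmetric] mult_ac)
  qed simp
  then have "(\<Sum>S\<in>P. \<Sum>R\<in>P. a S * b R * (real (sz S) - real (sz R)) * K S R)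
      = (\<Sum>S\<in>P. \<Sum>R\<in>P. \<Sum>k<2*d.
          riesz_weight d k * (a S * b R * sin ((real (sz S) - real (sz R)) * riesz_node d k) * K S R))"
    by (intro sum.cong refl) simp
  also have "\<dots> = (\<Sum>k<2*d. riesz_weight d k
      * (\<Sum>S\<in>P. \<Sum>R\<in>P. a S * b R * sin ((real (sz S) - real (sz R)) * riesz_node d k) * K S R))"
    unfolding sum_distrib_left
    by (subst sum.swap, rule sum.cong[OF refl], subst sum.swap, rule refl)
  finally show ?thesis .
qed

lemma banded_commutator_bound:
  fixes sz :: "'a \<Rightarrow> nat" and K :: "'a \<Rightarrow> 'a \<Rightarrow> real" and a b :: "'a \<Rightarrow> real"
  assumes banded: "\<And>S R. S \<in> P \<Longrightarrow> R \<in> P \<Longrightarrow> K S R \<noteq> 0 \<Longrightarrow> \<bar>int (sz S) - int (sz R)\<bar> \<le> int d"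
    and bounded: "\<And>\<alpha> \<beta>. \<bar>\<Sum>S\<in>P. \<Sum>R\<in>P. \<alpha> S * \<beta> R * K S R\<bar> \<le> M * L2_set \<alpha> P * L2_set \<beta> P"
    and M: "M \<ge> 0"
  shows "\<bar>\<Sum>S\<in>P. \<Sum>R\<in>P. a S * b R * (real (sz S) - real (sz R)) * K S R\<bar>
    \<le> real d * M * L2_set a P * L2_set b P"
proof (cases "d = 0")
  case True
  then have "(\<Sum>S\<in>P. \<Sum>R\<in>P. a S * b R * (real (sz S) - real (sz R)) * K S R) = 0"
    using banded by (intro sum.neutral ballI) fastforce
  then show ?thesis
    using True by simp
next
  case False
  then have d: "d > 0"
    by simp
  let ?N = "M * L2_set a P * L2_set b P"
  have "\<bar>\<Sum>S\<in>P. \<Sum>R\<in>P. a S * b R * (real (sz S) - real (sz R)) * K S R\<bar>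
      = \<bar>\<Sum>k<2*d. riesz_weight d k
          * (\<Sum>S\<in>P. \<Sum>R\<in>P. a S * b R * sin ((real (sz S) - real (sz R)) * riesz_node d k) * K S R)\<bar>"
    using banded_form_riesz_expansion[where P = P and sz = sz and K = K, OF d banded] by simp
  also have "\<dots> \<le> (\<Sum>k<2*d. \<bar>riesz_weight d k\<bar> * ?N)"
    by (intro order_trans[OF sum_abs] sum_mono) (simp add: abs_mult mult_left_mono rotated_form_bound[OF bounded M])
  also have "\<dots> = real d * ?N"
    using sum_abs_riesz_weight[OF d] by (simp add: sum_distrib_right[symmetric])
  finally show ?thesis
    by (simp add: mult.assoc)
qed

section \<open>Fourier analysis on the Boolean cube\<close>

lemma finite_cube [simp]: "finite (cube n)"
  using finite_lists_length_eq[of "UNIV :: bool set" n] by (simp add: cube_def)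

lemma cube_Suc: "cube (Suc n) = (\<lambda>(b, xs). b # xs) ` (UNIV \<times> cube n)"
  by (auto simp: cube_def length_Suc_conv)

lemma sum_cube_prod:
  fixes g :: "nat \<Rightarrow> bool \<Rightarrow> 'a :: comm_semiring_1"
  shows "(\<Sum>x\<in>cube n. \<Prod>i<n. g i (x ! i)) = (\<Prod>i<n. g i True + g i False)"
proof (induction n arbitrary: g)
  case 0
  have "cube 0 = {[]}"
    by (auto simp: cube_def)
  then show ?case
    by simp
next
  case (Suc n)
  have inj: "inj_on (\<lambda>(b, xs). b # xs) (UNIV \<times> cube n)"
    by (auto simp: inj_on_def)
  have "(\<Sum>x\<in>cube (Suc n). \<Prod>i<Suc n. g i (x ! i))
      = (\<Sum>(b, xs)\<in>UNIV \<times> cube n. \<Prod>i<Suc n. g i ((b # xs) ! i))"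
    unfolding cube_Suc sum.reindex[OF inj] by (simp add: comp_def case_prod_beta del: prod.lessThan_Suc)
  also have "\<dots> = (\<Sum>(b, xs)\<in>UNIV \<times> cube n. g 0 b * (\<Prod>i<n. g (Suc i) (xs ! i)))"
    by (simp only: prod.lessThan_Suc_shift nth_Cons_0 nth_Cons_Suc)
  also have "\<dots> = (g 0 True + g 0 False) * (\<Sum>xs\<in>cube n. \<Prod>i<n. g (Suc i) (xs ! i))"
    by (simp add: sum.cartesian_product[symmetric] UNIV_bool sum_distrib_left distrib_right sum.distrib add.commute)
  also have "\<dots> = (\<Prod>i<Suc n. g i True + g i False)"
    using Suc.IH[of "\<lambda>i. g (Suc i)"] by (simp add: prod.lessThan_Suc_shift del: prod.lessThan_Suc)
  finally show ?case .
qed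

definition walsh :: "nat \<Rightarrow> nat set \<Rightarrow> bool list \<Rightarrow> real" where
  "walsh n S x = (\<Prod>i<n. if i \<in> S \<and> x ! i then -1 else 1)"

definition fourier_coeff :: "nat \<Rightarrow> (bool list \<Rightarrow> real) \<Rightarrow> nat set \<Rightarrow> real" where
  "fourier_coeff n u S = (\<Sum>x\<in>cube n. u x * walsh n S x) / 2 ^ n"

lemma walsh_mult: "walsh n S x * walsh n R x = walsh n (sym_diff S R) x"
  unfolding walsh_def prod.distrib[symmetric] by (rule prod.cong) auto

lemma fourier_coeff_sym_diff:
  "(\<Sum>x\<in>cube n. q x * walsh n S x * walsh n R x) = 2 ^ n * fourier_coeff n q (sym_diff S R)"
  by (simp add: fourier_coeff_def walsh_mult[symmetric] mult.assoc)

lemma sum_walsh: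
  assumes "T \<subseteq> {..<n}"
  shows "(\<Sum>x\<in>cube n. walsh n T x) = (if T = {} then 2 ^ n else 0)"
proof -
  have "(\<Sum>x\<in>cube n. walsh n T x) = (\<Prod>i<n. if i \<in> T then 0 else 2)"
    unfolding walsh_def sum_cube_prod[of "\<lambda>i b. if i \<in> T \<and> b then -1 else 1"]
    by (rule prod.cong) auto
  also have "\<dots> = (if T = {} then 2 ^ n else 0)"
    using assms by (auto simp: prod_zero_iff)
  finally show ?thesis .
qed

lemma sum_walsh_mult:
  assumes "S \<subseteq> {..<n}" "R \<subseteq> {..<n}"
  shows "(\<Sum>x\<in>cube n. walsh n S x * walsh n R x) = (if S = R then 2 ^ n else 0)"
proof -
  have "sym_diff S R \<subseteq> {..<n}" and "sym_diff S R = {} \<longleftrightarrow> S = R"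
    using assms by auto
  then show ?thesis
    using sum_walsh[of "sym_diff S R" n] by (simp add: walsh_mult)
qed

lemma sum_walsh_mult_points:
  assumes x: "x \<in> cube n" and y: "y \<in> cube n"
  shows "(\<Sum>S\<in>Pow {..<n}. walsh n S x * walsh n S y) = (if x = y then 2 ^ n else 0)"
proof -
  define t where "t i = (if x ! i = y ! i then 1 else - 1 :: real)" for i
  have "walsh n S x * walsh n S y = (\<Prod>i\<in>S. t i) * (\<Prod>i\<in>{..<n} - S. 1)" if "S \<subseteq> {..<n}" for S
  proof -
    have "walsh n S x * walsh n S y = (\<Prod>i<n. if i \<in> S then t i else 1)"
      unfolding walsh_def prod.distrib[symmetric] t_def by (rule prod.cong) auto
    also have "\<dots> = (\<Prod>i\<in>S. t i)"
      using that by (simp add: prod.If_cases Int_absorb1)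
    finally show ?thesis
      by simp
  qed
  then have "(\<Sum>S\<in>Pow {..<n}. walsh n S x * walsh n S y) = (\<Prod>i<n. t i + 1)"
    by (simp add: prod_add)
  also have "\<dots> = (\<Prod>i<n. if x ! i = y ! i then 2 else 0)"
    by (rule prod.cong) (auto simp: t_def)
  also have "\<dots> = (if x = y then 2 ^ n else 0)"
    using x y by (auto simp: prod_zero_iff cube_def list_eq_iff_nth_eq)
  finally show ?thesis .
qed

lemma fourier_expansion:
  assumes "x \<in> cube n"
  shows "(\<Sum>S\<in>Pow {..<n}. fourier_coeff n u S * walsh n S x) = u x"
proof -
  have "(\<Sum>S\<in>Pow {..<n}. fourier_coeff n u S * walsh n S x)
      = (\<Sum>y\<in>cube n. u y * (\<Sum>S\<in>Pow {..<n}. walsh n S y * walsh n S x)) / 2 ^ n"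
    unfolding fourier_coeff_def sum_divide_distrib sum_distrib_left sum_distrib_right
    by (subst sum.swap) (simp add: mult.assoc)
  also have "\<dots> = (\<Sum>y\<in>cube n. if y = x then u y * 2 ^ n else 0) / 2 ^ n"
    using assms by (intro sum.cong arg_cong2[where f = divide]) (simp_all add: sum_walsh_mult_points)
  also have "\<dots> = u x"
    using assms by simp
  finally show ?thesis .
qed

lemma parseval_bilinear:
  "(\<Sum>x\<in>cube n. (\<Sum>S\<in>Pow {..<n}. \<alpha> S * walsh n S x) * (\<Sum>R\<in>Pow {..<n}. \<beta> R * walsh n R x))
    = 2 ^ n * (\<Sum>S\<in>Pow {..<n}. \<alpha> S * \<beta> S)"
proof -
  have "(\<Sum>x\<in>cube n. (\<Sum>S\<in>Pow {..<n}. \<alpha> S * walsh n S x) * (\<Sum>R\<in>Pow {..<n}. \<beta> R * walsh n R x))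
      = (\<Sum>x\<in>cube n. \<Sum>S\<in>Pow {..<n}. \<Sum>R\<in>Pow {..<n}. \<alpha> S * \<beta> R * (walsh n S x * walsh n R x))"
    by (simp add: sum_product algebra_simps)
  also have "\<dots> = (\<Sum>S\<in>Pow {..<n}. \<Sum>R\<in>Pow {..<n}. \<alpha> S * \<beta> R * (\<Sum>x\<in>cube n. walsh n S x * walsh n R x))"
    by (subst sum.swap, rule sum.cong[OF refl], subst sum.swap) (simp add: sum_distrib_left)
  also have "\<dots> = (\<Sum>S\<in>Pow {..<n}. \<Sum>R\<in>Pow {..<n}. if R = S then \<alpha> S * \<beta> R * 2 ^ n else 0)"
    by (intro sum.cong refl) (auto simp: sum_walsh_mult)
  also have "\<dots> = 2 ^ n * (\<Sum>S\<in>Pow {..<n}. \<alpha> S * \<beta> S)"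
    by (simp add: sum_distrib_left mult_ac)
  finally show ?thesis .
qed

lemma L2_set_walsh_combination:
  "L2_set (\<lambda>x. \<Sum>S\<in>Pow {..<n}. \<alpha> S * walsh n S x) (cube n) = sqrt (2 ^ n) * L2_set \<alpha> (Pow {..<n})"
  unfolding L2_set_def power2_eq_square parseval_bilinear by (simp add: real_sqrt_mult)

lemma parseval: "L2_set u (cube n) = sqrt (2 ^ n) * L2_set (fourier_coeff n u) (Pow {..<n})"
proof -
  have "L2_set u (cube n) = L2_set (\<lambda>x. \<Sum>S\<in>Pow {..<n}. fourier_coeff n u S * walsh n S x) (cube n)"
    by (rule L2_set_cong) (simp_all add: fourier_expansion)
  then show ?thesis
    by (simp add: L2_set_walsh_combination)
qed

lemma sum_monomial_walsh_eq_0: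
  assumes "i \<in> T" "i < n" "\<alpha> i = 0"
  shows "(\<Sum>x\<in>cube n. (\<Prod>j<n. bit x j ^ \<alpha> j) * walsh n T x) = 0"
proof -
  define g where "g j b = (if b then 1 else 0) ^ \<alpha> j * (if j \<in> T \<and> b then -1 else 1 :: real)" for j b
  have "(\<Sum>x\<in>cube n. (\<Prod>j<n. bit x j ^ \<alpha> j) * walsh n T x) = (\<Sum>x\<in>cube n. \<Prod>j<n. g j (x ! j))"
    unfolding walsh_def prod.distrib[symmetric] g_def by (simp add: bit_def)
  also have "\<dots> = (\<Prod>j<n. g j True + g j False)"
    by (rule sum_cube_prod)
  also have "\<dots> = 0"
    using assms by (auto simp: g_def prod_zero_iff intro!: bexI[of _ i])
  finally show ?thesis .
qed

lemma fourier_coeff_eq_0_if_degree_less: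
  assumes q: "is_poly_deg_le n d q" and T: "T \<subseteq> {..<n}" and d: "d < card T"
  shows "fourier_coeff n q T = 0"
proof -
  obtain A c where A: "\<forall>\<alpha>\<in>A. (\<forall>i\<ge>n. \<alpha> i = 0) \<and> (\<Sum>i<n. \<alpha> i) \<le> d"
    and q_eq: "\<forall>x\<in>cube n. q x = (\<Sum>\<alpha>\<in>A. c \<alpha> * (\<Prod>i<n. bit x i ^ \<alpha> i))"
    using q unfolding is_poly_deg_le_def by blast
  have "\<exists>i\<in>T. \<alpha> i = 0" if "\<alpha> \<in> A" for \<alpha>
  proof (rule ccontr)
    assume "\<not> (\<exists>i\<in>T. \<alpha> i = 0)"
    then have "card T \<le> (\<Sum>i\<in>T. \<alpha> i)"
      using sum_mono[of T "\<lambda>_. 1" \<alpha>] by (simp add: Suc_le_eq)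
    also have "\<dots> \<le> (\<Sum>i<n. \<alpha> i)"
      using T by (intro sum_mono2) auto
    finally show False
      using A that d by fastforce
  qed
  then have monomial: "(\<Sum>x\<in>cube n. (\<Prod>i<n. bit x i ^ \<alpha> i) * walsh n T x) = 0" if "\<alpha> \<in> A" for \<alpha>
    using that T sum_monomial_walsh_eq_0 by blast
  have "(\<Sum>x\<in>cube n. q x * walsh n T x)
      = (\<Sum>x\<in>cube n. \<Sum>\<alpha>\<in>A. c \<alpha> * ((\<Prod>i<n. bit x i ^ \<alpha> i) * walsh n T x))"
    by (intro sum.cong refl) (simp add: q_eq sum_distrib_right mult.assoc)
  also have "\<dots> = (\<Sum>\<alpha>\<in>A. c \<alpha> * (\<Sum>x\<in>cube n. (\<Prod>i<n. bit x i ^ \<alpha> i) * walsh n T x))"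
    by (subst sum.swap) (simp add: sum_distrib_left)
  also have "\<dots> = 0"
    by (simp add: monomial)
  finally show ?thesis
    by (simp add: fourier_coeff_def)
qed

lemma walsh_multilinear:
  assumes "S \<subseteq> {..<n}"
  shows "walsh n S x = (\<Sum>R\<in>Pow S. (-2) ^ card R * (\<Prod>i\<in>R. bit x i))"
proof -
  have "walsh n S x = (\<Prod>i<n. if i \<in> S then (-2) * bit x i + 1 else 1)"
    unfolding walsh_def by (rule prod.cong) (auto simp: bit_def)
  also have "\<dots> = (\<Prod>i\<in>S. (-2) * bit x i + 1)"
    using assms by (simp add: prod.If_cases Int_absorb1)
  also have "\<dots> = (\<Sum>R\<in>Pow S. (\<Prod>i\<in>R. (-2) * bit x i) * (\<Prod>i\<in>S - R. 1))"
    using assms finite_subset by (intro prod_add) blast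
  also have "\<dots> = (\<Sum>R\<in>Pow S. (-2) ^ card R * (\<Prod>i\<in>R. bit x i))"
    by (simp only: prod.distrib prod_constant power_one mult_1_right)
  finally show ?thesis .
qed

lemma is_poly_deg_le_multilinear:
  assumes "\<forall>x\<in>cube n. q x = (\<Sum>R\<in>Pow {..<n}. c R * (\<Prod>i\<in>R. bit x i))"
  shows "is_poly_deg_le n n q"
proof -
  define exponent where "exponent R = (\<lambda>i. of_bool (i \<in> R) :: nat)" for R :: "nat set"
  define A where "A = exponent ` Pow {..<n}"
  define c' where "c' \<alpha> = c {i. \<alpha> i \<noteq> 0}" for \<alpha> :: "nat \<Rightarrow> nat"
  have inj: "inj_on exponent (Pow {..<n})"
    by (rule inj_onI) (metis exponent_def of_bool_eq_iff set_eq_iff)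
  have degree: "(\<forall>i\<ge>n. \<alpha> i = 0) \<and> (\<Sum>i<n. \<alpha> i) \<le> n" if \<alpha>: "\<alpha> \<in> A" for \<alpha>
  proof -
    obtain R where R: "R \<subseteq> {..<n}" "\<alpha> = exponent R"
      using \<alpha> unfolding A_def by blast
    then have "(\<Sum>i<n. \<alpha> i) = card R"
      by (simp add: exponent_def Int_absorb1)
    also have "\<dots> \<le> n"
      using R card_mono[of "{..<n}" R] by simp
    finally show ?thesis
      using R by (auto simp: exponent_def)
  qed
  have "q x = (\<Sum>\<alpha>\<in>A. c' \<alpha> * (\<Prod>i<n. bit x i ^ \<alpha> i))" if "x \<in> cube n" for x
  proof -
    have "q x = (\<Sum>R\<in>Pow {..<n}. c R * (\<Prod>i\<in>R. bit x i))"
      using assms that by blast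
    also have "\<dots> = (\<Sum>R\<in>Pow {..<n}. c' (exponent R) * (\<Prod>i<n. bit x i ^ exponent R i))"
    proof (rule sum.cong[OF refl])
      fix R assume "R \<in> Pow {..<n}"
      then have "(\<Prod>i<n. bit x i ^ exponent R i) = (\<Prod>i\<in>R. bit x i)"
        by (simp add: exponent_def of_bool_def prod.If_cases Int_absorb1 if_distrib[of "\<lambda>e. _ ^ e"]
            cong: if_cong)
      moreover have "{i. exponent R i \<noteq> 0} = R"
        by (simp add: exponent_def)
      ultimately show "c R * (\<Prod>i\<in>R. bit x i) = c' (exponent R) * (\<Prod>i<n. bit x i ^ exponent R i)"
        by (simp add: c'_def)
    qed
    also have "\<dots> = (\<Sum>\<alpha>\<in>A. c' \<alpha> * (\<Prod>i<n. bit x i ^ \<alpha> i))"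
      unfolding A_def sum.reindex[OF inj] by simp
    finally show ?thesis .
  qed
  then show ?thesis
    unfolding is_poly_deg_le_def using degree by (intro exI[of _ A] exI[of _ c']) (simp add: A_def)
qed

lemma is_poly_deg_le_cube: "is_poly_deg_le n n q"
proof (rule is_poly_deg_le_multilinear, intro ballI)
  fix x assume x: "x \<in> cube n"
  have "q x = (\<Sum>S\<in>Pow {..<n}. fourier_coeff n q S * walsh n S x)"
    using fourier_expansion[OF x] by simp
  also have "\<dots> = (\<Sum>S\<in>Pow {..<n}. \<Sum>R\<in>{R \<in> Pow {..<n}. R \<subseteq> S}.
      fourier_coeff n q S * ((-2) ^ card R * (\<Prod>i\<in>R. bit x i)))"
  proof (rule sum.cong[OF refl])
    fix S assume S: "S \<in> Pow {..<n}"
    then have "Pow S = {R \<in> Pow {..<n}. R \<subseteq> S}"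
      by auto
    then show "fourier_coeff n q S * walsh n S x = (\<Sum>R\<in>{R \<in> Pow {..<n}. R \<subseteq> S}.
        fourier_coeff n q S * ((-2) ^ card R * (\<Prod>i\<in>R. bit x i)))"
      using S walsh_multilinear[of S n x] by (simp add: sum_distrib_left)
  qed
  also have "\<dots> = (\<Sum>R\<in>Pow {..<n}. \<Sum>S\<in>{S \<in> Pow {..<n}. R \<subseteq> S}.
      fourier_coeff n q S * ((-2) ^ card R * (\<Prod>i\<in>R. bit x i)))"
    by (rule sum.swap_restrict) simp_all
  finally show "q x = (\<Sum>R\<in>Pow {..<n}.
      ((\<Sum>S\<in>{S \<in> Pow {..<n}. R \<subseteq> S}. fourier_coeff n q S) * (-2) ^ card R) * (\<Prod>i\<in>R. bit x i))"
    by (simp add: sum_distrib_right mult.assoc)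
qed

section \<open>The commutator with the adjacency operator of the hypercube\<close>

definition flip_coord :: "bool list \<Rightarrow> nat \<Rightarrow> bool list" where
  "flip_coord x i = x[i := \<not> x ! i]"

lemma length_flip_coord [simp]: "length (flip_coord x i) = length x"
  by (simp add: flip_coord_def)

lemma nth_flip_coord: "i < length x \<Longrightarrow> flip_coord x i ! j = (if j = i then \<not> x ! i else x ! j)"
  by (simp add: flip_coord_def nth_list_update)

lemma flip_coord_in_cube: "x \<in> cube n \<Longrightarrow> flip_coord x i \<in> cube n"
  by (simp add: cube_def)

lemma flip_coord_flip_coord [simp]: "flip_coord (flip_coord x i) i = x"
  by (cases "i < length x") (simp_all add: flip_coord_def list_update_beyond)

lemma sum_flip_coord_reindex: "(\<Sum>x\<in>cube n. h (flip_coord x i)) = (\<Sum>x\<in>cube n. h x)"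
  by (rule sum.reindex_bij_witness[where i = "\<lambda>x. flip_coord x i" and j = "\<lambda>x. flip_coord x i"])
    (simp_all add: flip_coord_in_cube)

lemma walsh_flip_coord:
  assumes "x \<in> cube n" "i < n"
  shows "walsh n R (flip_coord x i) = (if i \<in> R then -1 else 1) * walsh n R x"
proof -
  have "walsh n R (flip_coord x i)
      = (\<Prod>j<n. (if j = i \<and> i \<in> R then -1 else 1) * (if j \<in> R \<and> x ! j then -1 else 1))"
    unfolding walsh_def using assms by (intro prod.cong) (auto simp: nth_flip_coord cube_def)
  also have "\<dots> = (if i \<in> R then -1 else 1) * walsh n R x"
    using assms by (simp add: prod.distrib walsh_def prod.If_cases)
  finally show ?thesis .
qed

text \<open>\<open>commutator_form n q u v = \<langle>u, (M\<^sub>q A - A M\<^sub>q) v\<rangle>\<close>, where \<open>A\<close> is the adjacency operator of the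
  hypercube and \<open>M\<^sub>q\<close> is multiplication by \<open>q\<close>.\<close>
definition commutator_form ::
    "nat \<Rightarrow> (bool list \<Rightarrow> real) \<Rightarrow> (bool list \<Rightarrow> real) \<Rightarrow> (bool list \<Rightarrow> real) \<Rightarrow> real" where
  "commutator_form n q u v = (\<Sum>x\<in>cube n. \<Sum>i<n. u x * v (flip_coord x i) * (q x - q (flip_coord x i)))"

lemma commutator_form_walsh:
  assumes S: "S \<subseteq> {..<n}" and R: "R \<subseteq> {..<n}"
  shows "commutator_form n q (walsh n S) (walsh n R)
    = 2 ^ (n + 1) * (real (card S) - real (card R)) * fourier_coeff n q (sym_diff S R)"
proof -
  define H where "H = (\<Sum>x\<in>cube n. walsh n S x * walsh n R x * q x)"
  have "commutator_form n q (walsh n S) (walsh n R)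
      = (\<Sum>i<n. (\<Sum>x\<in>cube n. walsh n S x * walsh n R (flip_coord x i) * q x)
                - (\<Sum>x\<in>cube n. walsh n S x * walsh n R (flip_coord x i) * q (flip_coord x i)))"
    unfolding commutator_form_def sum_subtractf[symmetric] by (subst sum.swap) (simp add: algebra_simps)
  also have "\<dots> = (\<Sum>i<n. 2 * H * (of_bool (i \<in> S) - of_bool (i \<in> R)))"
  proof (rule sum.cong[OF refl])
    fix i assume "i \<in> {..<n}"
    then have i: "i < n"
      by simp
    have unflipped: "(\<Sum>x\<in>cube n. walsh n S x * walsh n R (flip_coord x i) * q x)
        = (if i \<in> R then -1 else 1) * H"
      unfolding H_def sum_distrib_left by (rule sum.cong[OF refl]) (simp add: walsh_flip_coord i)
    have "(\<Sum>x\<in>cube n. walsh n S x * walsh n R (flip_coord x i) * q (flip_coord x i))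
        = (\<Sum>x\<in>cube n. walsh n S (flip_coord (flip_coord x i) i) * walsh n R (flip_coord x i)
            * q (flip_coord x i))"
      by simp
    also have "\<dots> = (\<Sum>x\<in>cube n. walsh n S (flip_coord x i) * walsh n R x * q x)"
      by (rule sum_flip_coord_reindex)
    also have "\<dots> = (if i \<in> S then -1 else 1) * H"
      unfolding H_def sum_distrib_left by (rule sum.cong[OF refl]) (simp add: walsh_flip_coord i)
    finally show "(\<Sum>x\<in>cube n. walsh n S x * walsh n R (flip_coord x i) * q x)
        - (\<Sum>x\<in>cube n. walsh n S x * walsh n R (flip_coord x i) * q (flip_coord x i))
        = 2 * H * (of_bool (i \<in> S) - of_bool (i \<in> R))"
      unfolding unflipped by simp
  qed
  also have "\<dots> = 2 * H * (real (card S) - real (card R))"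
    using S R by (simp add: sum_distrib_left[symmetric] sum_subtractf Int_absorb1)
  also have "H = 2 ^ n * fourier_coeff n q (sym_diff S R)"
    unfolding H_def fourier_coeff_sym_diff[symmetric] by (simp add: mult_ac)
  finally show ?thesis
    by (simp add: mult_ac)
qed

lemma sum_swap_two_inner:
  "(\<Sum>x\<in>A. \<Sum>i\<in>I. \<Sum>s\<in>P. \<Sum>r\<in>Q. f x i s r) = (\<Sum>s\<in>P. \<Sum>r\<in>Q. \<Sum>x\<in>A. \<Sum>i\<in>I. f x i s r)"
proof -
  have "(\<Sum>x\<in>A. \<Sum>i\<in>I. \<Sum>s\<in>P. \<Sum>r\<in>Q. f x i s r) = (\<Sum>x\<in>A. \<Sum>s\<in>P. \<Sum>i\<in>I. \<Sum>r\<in>Q. f x i s r)"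
    by (rule sum.cong[OF refl], rule sum.swap)
  also have "\<dots> = (\<Sum>x\<in>A. \<Sum>s\<in>P. \<Sum>r\<in>Q. \<Sum>i\<in>I. f x i s r)"
    by (rule sum.cong[OF refl], rule sum.cong[OF refl], rule sum.swap)
  also have "\<dots> = (\<Sum>s\<in>P. \<Sum>x\<in>A. \<Sum>r\<in>Q. \<Sum>i\<in>I. f x i s r)"
    by (rule sum.swap)
  also have "\<dots> = (\<Sum>s\<in>P. \<Sum>r\<in>Q. \<Sum>x\<in>A. \<Sum>i\<in>I. f x i s r)"
    by (rule sum.cong[OF refl], rule sum.swap)
  finally show ?thesis .
qed

lemma commutator_form_fourier:
  "commutator_form n q u v = (\<Sum>S\<in>Pow {..<n}. \<Sum>R\<in>Pow {..<n}.
    fourier_coeff n u S * fourier_coeff n v R * commutator_form n q (walsh n S) (walsh n R))"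
proof -
  have "commutator_form n q u v = (\<Sum>x\<in>cube n. \<Sum>i<n. \<Sum>S\<in>Pow {..<n}. \<Sum>R\<in>Pow {..<n}.
      fourier_coeff n u S * fourier_coeff n v R
        * (walsh n S x * walsh n R (flip_coord x i) * (q x - q (flip_coord x i))))"
    unfolding commutator_form_def
  proof (intro sum.cong refl)
    fix x i assume x: "x \<in> cube n"
    have "u x * v (flip_coord x i) * (q x - q (flip_coord x i))
        = (\<Sum>S\<in>Pow {..<n}. fourier_coeff n u S * walsh n S x)
          * (\<Sum>R\<in>Pow {..<n}. fourier_coeff n v R * walsh n R (flip_coord x i))
          * (q x - q (flip_coord x i))"
      using fourier_expansion[OF x, of u] fourier_expansion[OF flip_coord_in_cube[OF x, of i], of v]
      by simp
    also have "\<dots> = (\<Sum>S\<in>Pow {..<n}. \<Sum>R\<in>Pow {..<n}.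
        fourier_coeff n u S * walsh n S x * (fourier_coeff n v R * walsh n R (flip_coord x i))
          * (q x - q (flip_coord x i)))"
      by (subst sum_product) (simp only: sum_distrib_right)
    also have "\<dots> = (\<Sum>S\<in>Pow {..<n}. \<Sum>R\<in>Pow {..<n}.
        fourier_coeff n u S * fourier_coeff n v R
          * (walsh n S x * walsh n R (flip_coord x i) * (q x - q (flip_coord x i))))"
      by (simp only: mult_ac)
    finally show "u x * v (flip_coord x i) * (q x - q (flip_coord x i)) = \<dots>" .
  qed
  also have "\<dots> = (\<Sum>S\<in>Pow {..<n}. \<Sum>R\<in>Pow {..<n}. \<Sum>x\<in>cube n. \<Sum>i<n.
      fourier_coeff n u S * fourier_coeff n v R
        * (walsh n S x * walsh n R (flip_coord x i) * (q x - q (flip_coord x i))))"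
    by (rule sum_swap_two_inner)
  also have "\<dots> = (\<Sum>S\<in>Pow {..<n}. \<Sum>R\<in>Pow {..<n}.
      fourier_coeff n u S * fourier_coeff n v R * commutator_form n q (walsh n S) (walsh n R))"
    by (simp only: commutator_form_def sum_distrib_left mult.assoc)
  finally show ?thesis .
qed

lemma walsh_multiplier_bound:
  assumes q: "\<forall>x\<in>cube n. \<bar>q x\<bar> \<le> 1"
  shows "\<bar>\<Sum>S\<in>Pow {..<n}. \<Sum>R\<in>Pow {..<n}. \<alpha> S * \<beta> R * fourier_coeff n q (sym_diff S R)\<bar>
    \<le> L2_set \<alpha> (Pow {..<n}) * L2_set \<beta> (Pow {..<n})"
proof -
  define a where "a x = (\<Sum>S\<in>Pow {..<n}. \<alpha> S * walsh n S x)" for x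
  define b where "b x = (\<Sum>R\<in>Pow {..<n}. \<beta> R * walsh n R x)" for x
  have "(\<Sum>x\<in>cube n. q x * a x * b x)
      = (\<Sum>x\<in>cube n. \<Sum>S\<in>Pow {..<n}. \<Sum>R\<in>Pow {..<n}. \<alpha> S * \<beta> R * (q x * walsh n S x * walsh n R x))"
    unfolding a_def b_def by (intro sum.cong refl) (simp add: sum_product sum_distrib_left mult_ac)
  also have "\<dots> = (\<Sum>S\<in>Pow {..<n}. \<Sum>R\<in>Pow {..<n}. \<Sum>x\<in>cube n. \<alpha> S * \<beta> R * (q x * walsh n S x * walsh n R x))"
    by (subst sum.swap, rule sum.cong[OF refl], rule sum.swap)
  also have "\<dots> = (\<Sum>S\<in>Pow {..<n}. \<Sum>R\<in>Pow {..<n}. \<alpha> S * \<beta> R * (\<Sum>x\<in>cube n. q x * walsh n S x * walsh n R x))"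
    by (simp only: sum_distrib_left)
  also have "\<dots> = 2 ^ n * (\<Sum>S\<in>Pow {..<n}. \<Sum>R\<in>Pow {..<n}. \<alpha> S * \<beta> R * fourier_coeff n q (sym_diff S R))"
    unfolding fourier_coeff_sym_diff by (simp add: sum_distrib_left mult_ac)
  finally have form: "(\<Sum>S\<in>Pow {..<n}. \<Sum>R\<in>Pow {..<n}. \<alpha> S * \<beta> R * fourier_coeff n q (sym_diff S R))
      = (\<Sum>x\<in>cube n. q x * a x * b x) / 2 ^ n"
    by simp
  have "\<bar>\<Sum>x\<in>cube n. q x * a x * b x\<bar> \<le> (\<Sum>x\<in>cube n. \<bar>a x\<bar> * \<bar>b x\<bar>)"
    using q by (intro order_trans[OF sum_abs] sum_mono) (auto simp: abs_mult mult.assoc intro!: mult_left_le_one_le)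
  also have "\<dots> \<le> L2_set a (cube n) * L2_set b (cube n)"
    by (rule L2_set_mult_ineq)
  also have "\<dots> = 2 ^ n * (L2_set \<alpha> (Pow {..<n}) * L2_set \<beta> (Pow {..<n}))"
    unfolding a_def b_def L2_set_walsh_combination by (simp add: mult_ac)
  finally show ?thesis
    unfolding form by (simp add: abs_divide field_simps)
qed

lemma abs_card_diff_le_card_sym_diff:
  assumes "finite S" "finite R"
  shows "\<bar>real (card S) - real (card R)\<bar> \<le> real (card (sym_diff S R))"
proof -
  have bound: "card A \<le> card B + card (sym_diff A B)" if "finite A" "finite B" for A B :: "'a set"
  proof -
    have "card A \<le> card (B \<union> sym_diff A B)"
      using that by (intro card_mono) auto
    also have "\<dots> \<le> card B + card (sym_diff A B)"
      by (rule card_Un_le)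
    finally show ?thesis .
  qed
  have "sym_diff R S = sym_diff S R"
    by blast
  then have "card S \<le> card R + card (sym_diff S R)" "card R \<le> card S + card (sym_diff S R)"
    using bound[of S R] bound[of R S] assms by simp_all
  then show ?thesis
    by linarith
qed

lemma commutator_form_bound:
  assumes q: "\<forall>x\<in>cube n. \<bar>q x\<bar> \<le> 1"
    and degree: "\<And>T. T \<subseteq> {..<n} \<Longrightarrow> d < card T \<Longrightarrow> fourier_coeff n q T = 0"
  shows "\<bar>commutator_form n q u v\<bar> \<le> 2 * real d * L2_set u (cube n) * L2_set v (cube n)"
proof -
  let ?u = "L2_set (fourier_coeff n u) (Pow {..<n})" and ?v = "L2_set (fourier_coeff n v) (Pow {..<n})"
  define \<Delta> where "\<Delta> = (\<Sum>S\<in>Pow {..<n}. \<Sum>R\<in>Pow {..<n}.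
      fourier_coeff n u S * fourier_coeff n v R * (real (card S) - real (card R))
        * fourier_coeff n q (sym_diff S R))"
  have "commutator_form n q u v = 2 ^ (n + 1) * \<Delta>"
    unfolding \<Delta>_def sum_distrib_left
  proof (rule trans[OF commutator_form_fourier], intro sum.cong refl)
    fix S R assume "S \<in> Pow {..<n}" "R \<in> Pow {..<n}"
    then show "fourier_coeff n u S * fourier_coeff n v R * commutator_form n q (walsh n S) (walsh n R)
        = 2 ^ (n + 1) * (fourier_coeff n u S * fourier_coeff n v R * (real (card S) - real (card R))
          * fourier_coeff n q (sym_diff S R))"
      by (simp add: commutator_form_walsh)
  qed
  moreover have "\<bar>\<Delta>\<bar> \<le> real d * 1 * ?u * ?v"
    unfolding \<Delta>_def
  proof (rule banded_commutator_bound[where sz = card and a = "fourier_coeff n u"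
        and b = "fourier_coeff n v" and K = "\<lambda>S R. fourier_coeff n q (sym_diff S R)"])
    fix S R assume S: "S \<in> Pow {..<n}" and R: "R \<in> Pow {..<n}"
      and nonzero: "fourier_coeff n q (sym_diff S R) \<noteq> 0"
    have "card (sym_diff S R) \<le> d"
      using degree[of "sym_diff S R"] S R nonzero by fastforce
    moreover have "finite S" "finite R"
      using S R finite_subset by auto
    ultimately show "\<bar>int (card S) - int (card R)\<bar> \<le> int d"
      using abs_card_diff_le_card_sym_diff[of S R] by linarith
  next
    fix \<alpha> \<beta> :: "nat set \<Rightarrow> real"
    show "\<bar>\<Sum>S\<in>Pow {..<n}. \<Sum>R\<in>Pow {..<n}. \<alpha> S * \<beta> R * fourier_coeff n q (sym_diff S R)\<bar>
        \<le> 1 * L2_set \<alpha> (Pow {..<n}) * L2_set \<beta> (Pow {..<n})"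
      unfolding mult_1_left by (rule walsh_multiplier_bound[OF q])
  qed simp
  ultimately have "\<bar>commutator_form n q u v\<bar> \<le> 2 ^ (n + 1) * (real d * ?u * ?v)"
    by (simp add: abs_mult)
  also have "\<dots> = 2 * real d * (sqrt (2 ^ n) * ?u) * (sqrt (2 ^ n) * ?v)"
    by (simp add: mult_ac real_sqrt_mult[symmetric])
  finally show ?thesis
    unfolding parseval[of u] parseval[of v] .
qed

section \<open>The sensitivity graph\<close>

lemma inj_on_flip_coord:
  assumes "x \<in> cube n"
  shows "inj_on (flip_coord x) {..<n}"
proof (rule inj_onI, rule ccontr)
  fix i j assume "i \<in> {..<n}" "j \<in> {..<n}" "flip_coord x i = flip_coord x j" "i \<noteq> j"
  then have "flip_coord x i ! i = flip_coord x j ! i" "i < length x" "j < length x"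
    using assms by (auto simp: cube_def)
  then show False
    using \<open>i \<noteq> j\<close> by (simp add: nth_flip_coord)
qed

lemma sens_adj_flip_coord:
  assumes "x \<in> cube n" "i < n"
  shows "sens_adj n f x (flip_coord x i) = of_bool (f x \<noteq> f (flip_coord x i))"
proof -
  have "{j. j < n \<and> x ! j \<noteq> flip_coord x i ! j} = {i}"
    using assms by (auto simp: nth_flip_coord cube_def)
  then show ?thesis
    using assms flip_coord_in_cube by (simp add: sens_adj_def)
qed

lemma sens_adj_eq_0:
  assumes x: "x \<in> cube n" and y: "y \<notin> flip_coord x ` {..<n}"
  shows "sens_adj n f x y = 0"
proof (rule ccontr)
  assume "sens_adj n f x y \<noteq> 0"
  then have y_cube: "y \<in> cube n" and card: "card {j. j < n \<and> x ! j \<noteq> y ! j} = 1"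
    by (simp_all add: sens_adj_def split: if_splits)
  from card obtain i where i: "{j. j < n \<and> x ! j \<noteq> y ! j} = {i}"
    by (rule card_1_singletonE)
  then have "i < n"
    by auto
  have "y ! j = flip_coord x i ! j" if "j < n" for j
    using i that x \<open>i < n\<close> by (cases "j = i") (auto simp: cube_def nth_flip_coord)
  then have "y = flip_coord x i"
    using x y_cube by (intro nth_equalityI) (simp_all add: cube_def)
  then show False
    using y \<open>i < n\<close> by auto
qed

lemma sum_sens_adj:
  assumes x: "x \<in> cube n"
  shows "(\<Sum>y\<in>cube n. sens_adj n f x y * c y) = (\<Sum>i<n. sens_adj n f x (flip_coord x i) * c (flip_coord x i))"
proof -
  have "(\<Sum>y\<in>cube n. sens_adj n f x y * c y) = (\<Sum>y\<in>flip_coord x ` {..<n}. sens_adj n f x y * c y)"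
    using flip_coord_in_cube[OF x] sens_adj_eq_0[OF x] by (intro sum.mono_neutral_right) auto
  also have "\<dots> = (\<Sum>i<n. sens_adj n f x (flip_coord x i) * c (flip_coord x i))"
    by (simp add: sum.reindex[OF inj_on_flip_coord[OF x]])
  finally show ?thesis .
qed

definition signed :: "(bool list \<Rightarrow> bool) \<Rightarrow> bool list \<Rightarrow> real" where
  "signed f x = (if f x then 1 else -1)"

lemma eps_approx_abs_le_1:
  assumes "eps_approx n \<epsilon> f q" "0 \<le> \<epsilon>" "\<epsilon> < 1/2" "x \<in> cube n"
  shows "\<bar>q x\<bar> \<le> 1"
  using assms by (cases "f x") (auto simp: eps_approx_def)

lemma eps_approx_signed: "0 \<le> \<epsilon> \<Longrightarrow> eps_approx n \<epsilon> f (signed f)"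
  by (simp add: eps_approx_def signed_def)

lemma eps_approx_sensitive_edge:
  assumes "eps_approx n \<epsilon> f q" "x \<in> cube n" "y \<in> cube n" "f x \<noteq> f y"
  shows "4 * (1 - 2 * \<epsilon>) \<le> (q x - q y) * (signed f x - signed f y)"
proof -
  have bounds: "(f z \<longrightarrow> 1 - 2 * \<epsilon> \<le> q z) \<and> (\<not> f z \<longrightarrow> q z \<le> -1 + 2 * \<epsilon>)" if "z \<in> cube n" for z
    using assms(1) that unfolding eps_approx_def by blast
  show ?thesis
  proof (cases "f x")
    case True
    then show ?thesis
      using bounds[OF assms(2)] bounds[OF assms(3)] assms(4) by (simp add: signed_def)
  next
    case False
    then show ?thesis
      using bounds[OF assms(2)] bounds[OF assms(3)] assms(4) by (simp add: signed_def)
  qed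
qed

lemma sens_adj_form_bound:
  assumes \<epsilon>: "0 \<le> \<epsilon>" "\<epsilon> < 1/2"
    and q: "is_poly_deg_le n d q" "eps_approx n \<epsilon> f q"
    and b: "\<And>x. b x \<ge> 0" and c: "\<And>x. c x \<ge> 0"
  shows "(\<Sum>x\<in>cube n. \<Sum>y\<in>cube n. sens_adj n f x y * b x * c y)
    \<le> real d / (1 - 2 * \<epsilon>) * L2_set b (cube n) * L2_set c (cube n)"
proof -
  define e where "e = 1 - 2 * \<epsilon>"
  have e: "e > 0"
    using \<epsilon> by (simp add: e_def)
  have q_bound: "\<forall>x\<in>cube n. \<bar>q x\<bar> \<le> 1"
    using eps_approx_abs_le_1[OF q(2) \<epsilon>] by blast
  have degree: "fourier_coeff n q T = 0" if "T \<subseteq> {..<n}" "d < card T" for T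
    using fourier_coeff_eq_0_if_degree_less[OF q(1) that] .
  have L2_signed: "L2_set (\<lambda>x. signed f x * g x) (cube n) = L2_set g (cube n)" for g
    unfolding L2_set_def by (rule arg_cong[where f = sqrt], rule sum.cong) (simp_all add: signed_def)
  have "(\<Sum>x\<in>cube n. \<Sum>y\<in>cube n. sens_adj n f x y * b x * c y)
      = (\<Sum>x\<in>cube n. \<Sum>i<n. sens_adj n f x (flip_coord x i) * (b x * c (flip_coord x i)))"
    using sum_sens_adj[of _ n f "\<lambda>y. b _ * c y"] by (intro sum.cong refl) (simp add: mult_ac)
  also have "\<dots> \<le> (\<Sum>x\<in>cube n. \<Sum>i<n. b x * c (flip_coord x i)
      * ((q x - q (flip_coord x i)) * (signed f x - signed f (flip_coord x i)) / (4 * e)))"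
  proof (intro sum_mono)
    fix x i assume x: "x \<in> cube n" and "i \<in> {..<n}"
    then have i: "i < n"
      by simp
    show "sens_adj n f x (flip_coord x i) * (b x * c (flip_coord x i)) \<le> b x * c (flip_coord x i)
        * ((q x - q (flip_coord x i)) * (signed f x - signed f (flip_coord x i)) / (4 * e))"
    proof (cases "f x = f (flip_coord x i)")
      case True
      then show ?thesis
        by (simp add: sens_adj_flip_coord[OF x i] signed_def)
    next
      case False
      then have "1 \<le> (q x - q (flip_coord x i)) * (signed f x - signed f (flip_coord x i)) / (4 * e)"
        using eps_approx_sensitive_edge[OF q(2) x flip_coord_in_cube[OF x] False] e
        by (simp add: e_def)
      then have "b x * c (flip_coord x i) * 1 \<le> b x * c (flip_coord x i)
          * ((q x - q (flip_coord x i)) * (signed f x - signed f (flip_coord x i)) / (4 * e))"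
        using b c by (intro mult_left_mono) auto
      then show ?thesis
        using False by (simp add: sens_adj_flip_coord[OF x i])
    qed
  qed
  also have "\<dots> = (commutator_form n q (\<lambda>x. signed f x * b x) c
      - commutator_form n q b (\<lambda>y. signed f y * c y)) / (4 * e)"
    unfolding commutator_form_def sum_subtractf[symmetric] sum_divide_distrib
    by (intro sum.cong refl) (simp add: algebra_simps)
  also have "\<dots> \<le> (2 * real d * L2_set b (cube n) * L2_set c (cube n)
      + 2 * real d * L2_set b (cube n) * L2_set c (cube n)) / (4 * e)"
    using commutator_form_bound[where d = d and u = "\<lambda>x. signed f x * b x" and v = c, OF q_bound degree]
      commutator_form_bound[where d = d and u = b and v = "\<lambda>y. signed f y * c y", OF q_bound degree] e
    unfolding L2_signed by (intro divide_right_mono) linarith+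
  also have "\<dots> = real d / (1 - 2 * \<epsilon>) * L2_set b (cube n) * L2_set c (cube n)"
    using e by (simp add: e_def field_simps)
  finally show ?thesis .
qed

lemma L2_set_matrix_mult_le:
  fixes A :: "'a \<Rightarrow> 'a \<Rightarrow> real"
  assumes A: "\<And>x y. A x y \<ge> 0" and K: "K \<ge> 0"
    and form: "\<And>b c. (\<And>x. b x \<ge> 0) \<Longrightarrow> (\<And>x. c x \<ge> 0) \<Longrightarrow>
      (\<Sum>x\<in>X. \<Sum>y\<in>X. A x y * b x * c y) \<le> K * L2_set b X * L2_set c X"
  shows "L2_set (\<lambda>x. \<Sum>y\<in>X. A x y * v y) X \<le> K * L2_set v X"
proof -
  define w where "w = (\<lambda>x. \<Sum>y\<in>X. A x y * v y)"
  have "(L2_set w X)\<^sup>2 = (\<Sum>x\<in>X. w x * (\<Sum>y\<in>X. A x y * v y))"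
    by (simp add: L2_set_def sum_nonneg power2_eq_square w_def)
  also have "\<dots> = (\<Sum>x\<in>X. \<Sum>y\<in>X. A x y * w x * v y)"
    by (simp add: sum_distrib_left mult_ac)
  also have "\<dots> \<le> (\<Sum>x\<in>X. \<Sum>y\<in>X. A x y * \<bar>w x\<bar> * \<bar>v y\<bar>)"
    using A by (intro sum_mono) (simp add: mult.assoc mult_left_mono abs_mult[symmetric])
  also have "\<dots> \<le> K * L2_set (\<lambda>x. \<bar>w x\<bar>) X * L2_set (\<lambda>x. \<bar>v x\<bar>) X"
    by (rule form) simp_all
  also have "\<dots> = K * L2_set v X * L2_set w X"
    by (simp add: L2_set_def)
  finally have le: "L2_set w X * L2_set w X \<le> (K * L2_set v X) * L2_set w X"
    by (simp add: power2_eq_square)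
  have "L2_set w X \<le> K * L2_set v X"
  proof (cases "L2_set w X = 0")
    case True
    then show ?thesis
      using K by simp
  next
    case False
    then have "L2_set w X > 0"
      using L2_set_nonneg[of w X] by linarith
    then show ?thesis
      using le by (rule mult_right_le_imp_le[rotated])
  qed
  then show ?thesis
    by (simp add: w_def)
qed

lemma sens_lambda_le:
  assumes "\<And>v. L2_set (\<lambda>x. \<Sum>y\<in>cube n. sens_adj n f x y * v y) (cube n) \<le> K * L2_set v (cube n)"
  shows "sens_lambda n f \<le> K"
  unfolding sens_lambda_def
proof (rule cSup_least)
  define e where "e y = (if y = replicate n False then 1 else 0 :: real)" for y
  have "replicate n False \<in> cube n"
    by (simp add: cube_def)
  then have "(\<Sum>x\<in>cube n. (e x)\<^sup>2) = 1"
    by (simp add: e_def power2_eq_square if_distrib[of "\<lambda>t. t * _"] cong: if_cong)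
  then show "{sqrt (\<Sum>x\<in>cube n. (\<Sum>y\<in>cube n. sens_adj n f x y * v y)\<^sup>2) | v.
      (\<Sum>x\<in>cube n. (v x)\<^sup>2) = 1} \<noteq> {}"
    by blast
next
  fix s assume "s \<in> {sqrt (\<Sum>x\<in>cube n. (\<Sum>y\<in>cube n. sens_adj n f x y * v y)\<^sup>2) | v.
      (\<Sum>x\<in>cube n. (v x)\<^sup>2) = 1}"
  then obtain v where "s = L2_set (\<lambda>x. \<Sum>y\<in>cube n. sens_adj n f x y * v y) (cube n)"
    and "L2_set v (cube n) = 1"
    by (auto simp: L2_set_def)
  then show "s \<le> K"
    using assms[of v] by simp
qed

lemma approx_deg_attained:
  assumes "0 \<le> \<epsilon>"
  obtains q where "is_poly_deg_le n (approx_deg n \<epsilon> f) q" "eps_approx n \<epsilon> f q"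
proof -
  have "\<exists>d q. is_poly_deg_le n d q \<and> eps_approx n \<epsilon> f q"
    using is_poly_deg_le_cube eps_approx_signed[OF assms] by blast
  then have "\<exists>q. is_poly_deg_le n (approx_deg n \<epsilon> f) q \<and> eps_approx n \<epsilon> f q"
    unfolding approx_deg_def by (rule LeastI_ex)
  then show ?thesis
    using that by blast
qed

theorem theorem4p12:
  fixes n :: nat and f :: "bool list \<Rightarrow> bool" and \<epsilon> :: real
  assumes "0 \<le> \<epsilon>" and "\<epsilon> < 1/2"
  shows "sens_lambda n f \<le> (1 / (1 - 2*\<epsilon>)) * real (approx_deg n \<epsilon> f)"
proof -
  obtain q where q: "is_poly_deg_le n (approx_deg n \<epsilon> f) q" "eps_approx n \<epsilon> f q"
    using approx_deg_attained[OF assms(1)] .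
  let ?K = "real (approx_deg n \<epsilon> f) / (1 - 2 * \<epsilon>)"
  have "L2_set (\<lambda>x. \<Sum>y\<in>cube n. sens_adj n f x y * v y) (cube n) \<le> ?K * L2_set v (cube n)" for v
  proof (rule L2_set_matrix_mult_le)
    show "sens_adj n f x y \<ge> 0" for x y
      by (simp add: sens_adj_def)
    show "?K \<ge> 0"
      using assms by simp
  qed (rule sens_adj_form_bound[OF assms q])
  then show ?thesis
    by (intro sens_lambda_le) simp
qed

end
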